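(* Let $n\ge 3$ and let $D_{2n}=\langle a,b : a^n=b^2=e,\ bab=a^{-1}\rangle$ be the dihedral group of order $2n$. Let $H$ be a normal subgroup of $D_{2n}$. Then $\Gamma_{D_{2n},H}$ admits a perfect code if and only if either $H=D_{2n}$, or one of the following holds: (1) $n$ is odd and $H\le\langle a\rangle$; (2) $n$ is even and $H=\langle a^2,b\rangle$, or $H=\langle a^2,ab\rangle$, or $H=\langle a^t\rangle$ for a positive divisor $t$ of $n$ such that either $n/t$ is odd, or $n/t=2$, or $n/t\ge 4$ is even and $t$ is odd.
   Context: For a normal subgroup $H$ of a finite group $G$ with identity $e$, the subgroup sum graph $\Gamma_{G,H}$ is the simple undirected graph with vertex set $G$ in which distinct vertices $x,y$ are adjacent if and only if $xy\in H\setminus\{e\}$. A perfect code in a graph is a set $C$ of vertices that is independent and such that every vertex not in $C$ is adjacent to exactly one vertex of $C$. *)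

theory Defs
  imports "HOL-Algebra.Algebra"
begin

definition ssg_adj :: "('a, 'b) monoid_scheme \<Rightarrow> 'a set \<Rightarrow> 'a \<Rightarrow> 'a \<Rightarrow> bool" where
  "ssg_adj G H x y \<longleftrightarrow> x \<in> carrier G \<and> y \<in> carrier G \<and> x \<noteq> y \<and>
      x \<otimes>\<^bsub>G\<^esub> y \<in> H - {\<one>\<^bsub>G\<^esub>}"

definition ssg_perfect_code :: "('a, 'b) monoid_scheme \<Rightarrow> 'a set \<Rightarrow> 'a set \<Rightarrow> bool" where
  "ssg_perfect_code G H C \<longleftrightarrow> C \<subseteq> carrier G \<and>
      (\<forall>x\<in>C. \<forall>y\<in>C. \<not> ssg_adj G H x y) \<and>
      (\<forall>v\<in>carrier G - C. \<exists>!c. c \<in> C \<and> ssg_adj G H v c)"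

definition ssg_has_perfect_code :: "('a, 'b) monoid_scheme \<Rightarrow> 'a set \<Rightarrow> bool" where
  "ssg_has_perfect_code G H \<longleftrightarrow> (\<exists>C. ssg_perfect_code G H C)"

text \<open>Dihedral group of order 2n: the pair (i, s) with i < n represents a^i b^s
  (s = True meaning b is present). Then a^i b^s * a^j b^t = a^(i +- j) b^(s xor t).\<close>
definition dihedral :: "nat \<Rightarrow> (nat \<times> bool) monoid" where
  "dihedral n = \<lparr> carrier = {0..<n} \<times> UNIV,
     monoid.mult = (\<lambda>(i, s) (j, t). ((i + (if s then n - j else j)) mod n, s \<noteq> t)),
     monoid.one = (0, False) \<rparr>"

definition dih_a :: "nat \<Rightarrow> nat \<times> bool" where "dih_a n = (1 mod n, False)"
definition dih_b :: "nat \<times> bool" where "dih_b = (0, True)"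

end

theory Submission
  imports Defs
begin

text \<open>
  Since \<open>H\<close> is normal, \<open>x y \<in> H\<close> iff \<open>H y = (H x)\<inverse>\<close>, so the subgroup sum graph splits
  along the pairs \<open>{K, K\<inverse>}\<close> of cosets of \<open>H\<close>: if \<open>K \<noteq> K\<inverse>\<close> the part on \<open>K \<union> K\<inverse>\<close>
  is complete bipartite minus the matching \<open>x \<leftrightarrow> x\<inverse>\<close>, and if \<open>K = K\<inverse>\<close> the part on \<open>K\<close>
  is complete minus that matching. The former always has the perfect code \<open>{z, z\<inverse>}\<close>; the
  latter has one iff \<open>|K| \<le> 2\<close> or \<open>K\<close> contains some \<open>y\<close> with \<open>y\<^sup>2 = e\<close>. So a perfect code
  exists iff \<open>|H| \<le> 2\<close> or every element of order at most 2 of \<open>G/H\<close> lifts to one of \<open>G\<close>.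

  In \<open>D\<^sub>2\<^sub>n\<close>, a normal subgroup containing a reflection is \<open>D\<^sub>2\<^sub>n\<close> or (for even \<open>n\<close>) one
  of the two subgroups \<open>\<langle>a\<^sup>2, a\<^sup>j b\<rangle>\<close> of index two, and the lifting condition holds because
  every coset contains a reflection. Any other normal subgroup is \<open>\<langle>a\<^sup>d\<rangle>\<close> with \<open>d | n\<close>, and
  there the lifting condition becomes the congruence statement that every \<open>k\<close> with
  \<open>2k \<equiv> 0 (mod d)\<close> is congruent mod \<open>d\<close> to some \<open>l\<close> with \<open>2l \<equiv> 0 (mod n)\<close>, which holds iff
  \<open>d\<close> or \<open>n/d\<close> is odd.
\<close>

definition involutions_lift :: "('a, 'b) monoid_scheme \<Rightarrow> 'a set \<Rightarrow> bool" where
  "involutions_lift G H \<longleftrightarrow>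
     (\<forall>x\<in>carrier G. x \<otimes>\<^bsub>G\<^esub> x \<in> H \<longrightarrow> (\<exists>y\<in>H #>\<^bsub>G\<^esub> x. y \<otimes>\<^bsub>G\<^esub> y = \<one>\<^bsub>G\<^esub>))"

definition coset_pair :: "('a, 'b) monoid_scheme \<Rightarrow> 'a set \<Rightarrow> 'a \<Rightarrow> 'a set set" where
  "coset_pair G H x = {H #>\<^bsub>G\<^esub> x, H #>\<^bsub>G\<^esub> inv\<^bsub>G\<^esub> x}"

definition pair_rep :: "('a, 'b) monoid_scheme \<Rightarrow> 'a set \<Rightarrow> 'a set set \<Rightarrow> 'a" where
  "pair_rep G H P =
     (if \<exists>z\<in>carrier G. H #>\<^bsub>G\<^esub> z \<in> P \<and> z \<otimes>\<^bsub>G\<^esub> z = \<one>\<^bsub>G\<^esub>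
      then SOME z. z \<in> carrier G \<and> H #>\<^bsub>G\<^esub> z \<in> P \<and> z \<otimes>\<^bsub>G\<^esub> z = \<one>\<^bsub>G\<^esub>
      else SOME z. z \<in> carrier G \<and> H #>\<^bsub>G\<^esub> z \<in> P)"

definition pair_code :: "('a, 'b) monoid_scheme \<Rightarrow> 'a set \<Rightarrow> 'a set" where
  "pair_code G H =
     {c \<in> carrier G. pair_rep G H (coset_pair G H c) \<in> {c, inv\<^bsub>G\<^esub> c}}"

context normal
begin

lemma mult_mem_commute: "x \<in> carrier G \<Longrightarrow> y \<in> carrier G \<Longrightarrow> x \<otimes> y \<in> H \<Longrightarrow> y \<otimes> x \<in> H"
  using inv_op_closed1[of x "x \<otimes> y"] by (simp add: m_assoc[symmetric])

lemma mult_mem_iff_rcos_eq: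
  assumes x: "x \<in> carrier G" and y: "y \<in> carrier G"
  shows "x \<otimes> y \<in> H \<longleftrightarrow> H #> y = H #> inv x"
proof -
  have "x \<otimes> y \<in> H \<longleftrightarrow> y \<otimes> inv (inv x) \<in> H"
    using x y mult_mem_commute by auto
  also have "\<dots> \<longleftrightarrow> y \<in> H #> inv x"
    using x y by (simp add: rcos_module is_group)
  also have "\<dots> \<longleftrightarrow> H #> y = H #> inv x"
    using x y repr_independence repr_independenceD subgroup_axioms by (metis inv_closed)
  finally show ?thesis .
qed

lemma rcos_inv_cong: "x \<in> carrier G \<Longrightarrow> y \<in> carrier G \<Longrightarrow> H #> x = H #> y \<Longrightarrow> H #> inv x = H #> inv y"
  by (metis rcos_inv)

lemma rcos_mem_iff:
  assumes x: "x \<in> carrier G"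
  shows "w \<in> H #> x \<longleftrightarrow> w \<in> carrier G \<and> H #> w = H #> x"
proof
  assume w: "w \<in> H #> x"
  then show "w \<in> carrier G \<and> H #> w = H #> x"
    using r_coset_subset_G[OF subset x] repr_independence[OF w x subgroup_axioms] by auto
next
  assume "w \<in> carrier G \<and> H #> w = H #> x"
  then show "w \<in> H #> x" using repr_independenceD[OF subgroup_axioms, of w x] by simp
qed

lemma ssg_adj_iff:
  "ssg_adj G H x y \<longleftrightarrow>
     x \<in> carrier G \<and> y \<in> carrier G \<and> y \<noteq> x \<and> y \<noteq> inv x \<and> H #> y = H #> inv x"
  unfolding ssg_adj_def using mult_mem_iff_rcos_eq inv_equality r_inv by fastforce

lemma coset_pair_eq:
  assumes "x \<in> carrier G" "y \<in> carrier G" "H #> y \<in> coset_pair G H x"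
  shows "coset_pair G H y = coset_pair G H x"
  using assms rcos_inv_cong[of y x] rcos_inv_cong[of y "inv x"] unfolding coset_pair_def by auto

lemma ssg_adj_coset_pair: "ssg_adj G H x y \<Longrightarrow> coset_pair G H y = coset_pair G H x"
  using coset_pair_eq[of x y] unfolding ssg_adj_iff coset_pair_def by auto

lemma coset_pair_inv: "x \<in> carrier G \<Longrightarrow> coset_pair G H (inv x) = coset_pair G H x"
  unfolding coset_pair_def by auto

lemma pair_rep_closed:
  assumes "x \<in> carrier G"
  shows "pair_rep G H (coset_pair G H x) \<in> carrier G"
    and "coset_pair G H (pair_rep G H (coset_pair G H x)) = coset_pair G H x"
proof -
  let ?P = "coset_pair G H x"
  have "x \<in> carrier G \<and> H #> x \<in> ?P" using assms unfolding coset_pair_def by simp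
  then have "pair_rep G H ?P \<in> carrier G \<and> H #> pair_rep G H ?P \<in> ?P"
    unfolding pair_rep_def
    using someI_ex[of "\<lambda>z. z \<in> carrier G \<and> H #> z \<in> ?P \<and> z \<otimes> z = \<one>"]
      someI[of "\<lambda>z. z \<in> carrier G \<and> H #> z \<in> ?P" x]
    by (auto split: if_splits)
  then show "pair_rep G H ?P \<in> carrier G" "coset_pair G H (pair_rep G H ?P) = ?P"
    using coset_pair_eq assms by auto
qed

lemma pair_rep_square_one:
  assumes "z \<in> carrier G" "H #> z \<in> P" "z \<otimes> z = \<one>"
  shows "pair_rep G H P \<otimes> pair_rep G H P = \<one>"
  using assms someI_ex[of "\<lambda>z. z \<in> carrier G \<and> H #> z \<in> P \<and> z \<otimes> z = \<one>"]
  unfolding pair_rep_def by auto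

lemma pair_code_rep:
  assumes "x \<in> carrier G"
  shows "pair_rep G H (coset_pair G H x) \<in> pair_code G H"
    and "inv pair_rep G H (coset_pair G H x) \<in> pair_code G H"
  using pair_rep_closed[OF assms] coset_pair_inv unfolding pair_code_def by auto

lemma pair_code_inv: "c \<in> pair_code G H \<Longrightarrow> inv c \<in> pair_code G H"
  unfolding pair_code_def using coset_pair_inv by auto

lemma pair_code_same_pair:
  assumes "c \<in> pair_code G H" "c' \<in> pair_code G H" "coset_pair G H c' = coset_pair G H c"
  shows "c' \<in> {c, inv c}"
  using assms unfolding pair_code_def by auto

lemma pair_rep_self_inverse:
  assumes crit: "card H \<le> 2 \<or> involutions_lift G H" and fin: "finite H"
    and v: "v \<in> carrier G" and z: "z = pair_rep G H (coset_pair G H v)"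
    and eq: "H #> z = H #> inv v" "H #> inv z = H #> inv v"
    and ne: "v \<noteq> z" "v \<noteq> inv z"
  shows "inv z = z"
proof -
  have zc: "z \<in> carrier G" using pair_rep_closed(1)[OF v] z by simp
  have "H #> z = H #> v" using rcos_inv_cong[of "inv z" "inv v"] eq(2) zc v by simp
  then have in_coset: "{v, z, inv z} \<subseteq> H #> z"
    using eq v zc repr_independenceD[OF subgroup_axioms] by (metis empty_subsetI insert_subset inv_closed)
  from crit show ?thesis
  proof
    assume card: "card H \<le> 2"
    show ?thesis
    proof (rule ccontr)
      assume "inv z \<noteq> z"
      then have "card {v, z, inv z} = 3" using ne by auto
      moreover have "card (H #> z) = card H"
        using card_rcosets_equal rcosetsI subset zc by metis
      moreover have "finite (H #> z)" using rcosets_finite rcosetsI subset zc fin by metis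
      ultimately show False using card card_mono[OF _ in_coset] by simp
    qed
  next
    assume "involutions_lift G H"
    moreover have "z \<otimes> z \<in> H" using mult_mem_iff_rcos_eq zc eq by simp
    ultimately obtain y where y: "y \<in> H #> z" "y \<otimes> y = \<one>"
      using zc unfolding involutions_lift_def by blast
    have "y \<in> carrier G" using y(1) zc r_coset_subset_G subset by blast
    moreover have "H #> y \<in> coset_pair G H v"
      using repr_independence[OF y(1) zc subgroup_axioms] eq unfolding coset_pair_def by simp
    ultimately have "z \<otimes> z = \<one>" using pair_rep_square_one y(2) z by blast
    then show ?thesis using inv_equality zc by simp
  qed
qed

lemma pair_code_independent:
  assumes "c \<in> pair_code G H" "c' \<in> pair_code G H"
  shows "\<not> ssg_adj G H c c'"
proof
  assume adj: "ssg_adj G H c c'"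
  then have "coset_pair G H c' = coset_pair G H c" by (rule ssg_adj_coset_pair)
  then show False using pair_code_same_pair[OF assms] adj unfolding ssg_adj_iff by auto
qed

lemma pair_code_dominates:
  assumes crit: "card H \<le> 2 \<or> involutions_lift G H" and fin: "finite H"
    and v: "v \<in> carrier G" and v_notin: "v \<notin> pair_code G H"
  shows "\<exists>!c. c \<in> pair_code G H \<and> ssg_adj G H v c"
proof -
  define z where "z = pair_rep G H (coset_pair G H v)"
  have zc: "z \<in> carrier G" and z_pair: "coset_pair G H z = coset_pair G H v"
    using pair_rep_closed[OF v] unfolding z_def by auto
  have z_code: "z \<in> pair_code G H" "inv z \<in> pair_code G H"
    using pair_code_rep[OF v] unfolding z_def by auto
  have adj_iff: "ssg_adj G H v c \<longleftrightarrow> c \<in> {z, inv z} \<and> H #> c = H #> inv v"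
    if c: "c \<in> pair_code G H" for c
  proof
    assume adj: "ssg_adj G H v c"
    then have "coset_pair G H c = coset_pair G H v" by (rule ssg_adj_coset_pair)
    then show "c \<in> {z, inv z} \<and> H #> c = H #> inv v"
      using pair_code_same_pair[OF z_code(1) c] z_pair adj inv_inv zc unfolding ssg_adj_iff by auto
  next
    assume "c \<in> {z, inv z} \<and> H #> c = H #> inv v"
    moreover have "c \<noteq> v" "c \<noteq> inv v"
      using c v_notin pair_code_inv[OF c] inv_inv v by auto
    ultimately show "ssg_adj G H v c" using zc v unfolding ssg_adj_iff by auto
  qed
  have "\<exists>c\<in>{z, inv z}. H #> c = H #> inv v"
    using z_pair rcos_inv_cong[of z v] zc v unfolding coset_pair_def by (auto simp: doubleton_eq_iff)
  moreover have "c = c'" if "c \<in> {z, inv z}" "c' \<in> {z, inv z}"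
      "H #> c = H #> inv v" "H #> c' = H #> inv v" for c c'
  proof -
    have "v \<noteq> z" "v \<noteq> inv z" using z_code v_notin by auto
    then have "inv z = z" if "H #> z = H #> inv v" "H #> inv z = H #> inv v"
      using pair_rep_self_inverse[OF crit fin v z_def that] by simp
    then show ?thesis using that by auto
  qed
  ultimately show ?thesis using adj_iff z_code by (metis insert_iff singletonD)
qed

lemma pair_code_is_perfect_code:
  assumes "card H \<le> 2 \<or> involutions_lift G H" and "finite H"
  shows "ssg_perfect_code G H (pair_code G H)"
  unfolding ssg_perfect_code_def
  using pair_code_independent pair_code_dominates[OF assms] by (auto simp: pair_code_def)

lemma self_inverse_rcos_inv_closed:
  assumes x: "x \<in> carrier G" and self_inv: "H #> x = H #> inv x" and u: "u \<in> H #> x"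
  shows "inv u \<in> H #> x"
proof -
  have uc: "u \<in> carrier G" "H #> u = H #> x" using rcos_mem_iff[OF x] u by auto
  then have "H #> inv u = H #> x" using rcos_inv_cong[OF uc(1) x] self_inv by simp
  then show ?thesis using rcos_mem_iff[OF x] uc by simp
qed

lemma ssg_adj_in_self_inverse_coset:
  assumes x: "x \<in> carrier G" and self_inv: "H #> x = H #> inv x" and u: "u \<in> H #> x"
  shows "ssg_adj G H u w \<longleftrightarrow> w \<in> H #> x \<and> w \<noteq> u \<and> w \<noteq> inv u"
proof -
  have uc: "u \<in> carrier G" and "H #> u = H #> x" using rcos_mem_iff[OF x] u by auto
  then have "H #> inv u = H #> x" using rcos_inv_cong[OF uc x] self_inv by simp
  then show ?thesis using uc rcos_mem_iff[OF x, of w] unfolding ssg_adj_iff by auto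
qed

lemma perfect_code_meets_self_inverse_coset:
  assumes code: "ssg_perfect_code G H C"
    and x: "x \<in> carrier G" and self_inv: "H #> x = H #> inv x"
  obtains c where "c \<in> C" "c \<in> H #> x"
proof (cases "x \<in> C")
  case True
  then show ?thesis using that rcos_self[OF x subgroup_axioms] by blast
next
  case False
  then obtain c where "c \<in> C" "ssg_adj G H x c"
    using code x unfolding ssg_perfect_code_def by blast
  then show ?thesis
    using that ssg_adj_in_self_inverse_coset[OF x self_inv rcos_self[OF x subgroup_axioms]] by blast
qed

lemma perfect_code_imp_involutions_lift:
  assumes code: "ssg_perfect_code G H C"
  shows "card H \<le> 2 \<or> involutions_lift G H"
proof (rule ccontr)
  assume "\<not> (card H \<le> 2 \<or> involutions_lift G H)"
  then obtain x where big: "card H > 2" and x: "x \<in> carrier G" "x \<otimes> x \<in> H"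
    and no_inv: "\<And>y. y \<in> H #> x \<Longrightarrow> y \<otimes> y \<noteq> \<one>"
    unfolding involutions_lift_def by auto
  have indep: "\<And>a b. a \<in> C \<Longrightarrow> b \<in> C \<Longrightarrow> \<not> ssg_adj G H a b"
    and dom: "\<And>v. v \<in> carrier G - C \<Longrightarrow> \<exists>!c. c \<in> C \<and> ssg_adj G H v c"
    using code unfolding ssg_perfect_code_def by auto
  let ?K = "H #> x"
  have self_inv: "H #> x = H #> inv x" using mult_mem_iff_rcos_eq x by simp
  note adj_iff = ssg_adj_in_self_inverse_coset[OF x(1) self_inv]
  note K_inv = self_inverse_rcos_inv_closed[OF x(1) self_inv]
  have K_carrier: "?K \<subseteq> carrier G" using r_coset_subset_G[OF subset x(1)] .
  have K_ne_inv: "inv u \<noteq> u" if u: "u \<in> ?K" for u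
    using no_inv[OF u] r_inv[of u] u K_carrier by (metis subsetD)
  obtain c where c: "c \<in> C" "c \<in> ?K"
    using perfect_code_meets_self_inverse_coset[OF code x(1) self_inv] .
  obtain w where w: "w \<in> ?K" "w \<noteq> c" "w \<noteq> inv c"
  proof -
    have "\<not> ?K \<subseteq> {c, inv c}"
    proof
      assume "?K \<subseteq> {c, inv c}"
      then have "card ?K \<le> card {c, inv c}" by (simp add: card_mono)
      also have "\<dots> \<le> 2" by (simp add: card_insert_if)
      finally show False
        using big card_rcosets_equal[OF rcosetsI[OF subset x(1)] subset] by simp
    qed
    then show ?thesis using that by blast
  qed
  have wc: "w \<in> carrier G" and cc: "c \<in> carrier G" using w(1) c(2) K_carrier by auto
  have "c \<noteq> inv w" using w(3) inv_inv[OF wc] by auto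
  then have adj_wc: "ssg_adj G H w c" using adj_iff[OF w(1)] w(2) c(2) by simp
  then have w_notin: "w \<notin> C" using indep c(1) by blast
  show False
  proof (cases "inv c \<in> C")
    case True
    have "inv c \<noteq> inv w" using w(2) inv_inv wc cc by metis
    then have "ssg_adj G H w (inv c)" using adj_iff[OF w(1)] w(3) K_inv[OF c(2)] by simp
    moreover have "w \<in> carrier G - C" using wc w_notin by simp
    ultimately have "inv c = c" using dom adj_wc c(1) True by (metis (no_types, lifting))
    then show False using K_ne_inv[OF c(2)] by simp
  next
    case False
    then have "inv c \<in> carrier G - C" using cc by simp
    then obtain c' where c': "c' \<in> C" "ssg_adj G H (inv c) c'" using ex1_implies_ex[OF dom] by blast
    then have "c' \<in> ?K" "c' \<noteq> c" "c' \<noteq> inv c"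
      using adj_iff[OF K_inv[OF c(2)]] inv_inv[OF cc] by auto
    then have "ssg_adj G H c c'" using adj_iff[OF c(2)] by simp
    then show False using indep c(1) c'(1) by blast
  qed
qed

theorem ssg_has_perfect_code_iff:
  assumes "finite H"
  shows "ssg_has_perfect_code G H \<longleftrightarrow> card H \<le> 2 \<or> involutions_lift G H"
  using pair_code_is_perfect_code[OF _ assms] perfect_code_imp_involutions_lift
  unfolding ssg_has_perfect_code_def by blast

end


lemma dvd_iff_of_mod_eq: "(d::int) dvd m \<Longrightarrow> k mod m = l mod m \<Longrightarrow> d dvd k \<longleftrightarrow> d dvd l"
  by (metis mod_mod_cancel dvd_eq_mod_eq_0)

lemma diff_closed_eq_multiples:
  fixes I :: "int set"
  assumes diff: "\<And>k l. k \<in> I \<Longrightarrow> l \<in> I \<Longrightarrow> k - l \<in> I" and m: "int m \<in> I" "0 < m"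
  shows "\<exists>d>0. d dvd m \<and> I = {k. int d dvd k}"
proof -
  have zero: "0 \<in> I" using diff[OF m(1) m(1)] by simp
  have add: "k + l \<in> I" if "k \<in> I" "l \<in> I" for k l
    using diff[OF that(1) diff[OF zero that(2)]] by simp
  have mult: "c * q \<in> I" if c: "c \<in> I" for c q
  proof -
    have nat_mult: "c * int j \<in> I" for j
      by (induction j) (simp_all add: zero add c algebra_simps)
    show ?thesis
    proof (cases q rule: int_cases)
      case (neg j)
      then have "c * q = 0 - c * int (Suc j)" by (simp only: mult_minus_right diff_0)
      then show ?thesis using diff[OF zero nat_mult[of "Suc j"]] by simp
    qed (simp add: nat_mult)
  qed
  define d where "d = (LEAST d. 0 < d \<and> int d \<in> I)"
  have d: "0 < d" "int d \<in> I"
    using LeastI[of "\<lambda>d. 0 < d \<and> int d \<in> I" m] m unfolding d_def by auto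
  have d_min: "d \<le> r" if "0 < r" "int r \<in> I" for r
    using Least_le[of "\<lambda>d. 0 < d \<and> int d \<in> I" r] that unfolding d_def by auto
  have I_eq: "k \<in> I \<longleftrightarrow> int d dvd k" for k
  proof
    assume k: "k \<in> I"
    have "k mod int d \<in> I"
      using diff[OF k mult[OF d(2), of "k div int d"]] by (simp add: minus_mult_div_eq_mod)
    moreover have "0 \<le> k mod int d" "k mod int d < int d" using d(1) by simp_all
    ultimately have "k mod int d = 0"
      using d_min[of "nat (k mod int d)"] by (cases "k mod int d = 0") auto
    then show "int d dvd k" by (simp add: dvd_eq_mod_eq_0)
  next
    assume "int d dvd k"
    then show "k \<in> I" using mult[OF d(2)] by (auto elim: dvdE)
  qed
  then have "d dvd m" using m(1) by simp
  with d(1) I_eq show ?thesis by blast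
qed

lemma odd_dvd_double_imp_dvd:
  assumes "odd d" "int d dvd 2 * k" shows "int d dvd k"
proof -
  obtain c where c: "2 * k = int d * c" using assms(2) by (elim dvdE)
  then have "even c" using assms(1) by (metis even_mult_iff even_of_nat dvd_triv_left)
  then obtain c' where "c = 2 * c'" by (elim evenE)
  then show ?thesis using c by simp
qed

lemma half_multiples_lift:
  assumes dn: "d dvd n" and odd: "odd d \<or> odd (n div d)" and k: "int d dvd 2 * k"
  shows "\<exists>l. int d dvd l - k \<and> int n dvd 2 * l"
proof (cases "int d dvd k")
  case True
  then show ?thesis by (intro exI[of _ 0]) simp
next
  case False
  then have "even d" using odd_dvd_double_imp_dvd k by blast
  then obtain e where e: "d = 2 * e" by (elim evenE)
  have odd_m: "odd (n div d)" using odd \<open>even d\<close> by blast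
  obtain c where c: "2 * k = int d * c" using k by (elim dvdE)
  then have k_eq: "k = int e * c" using e by simp
  have "odd c"
  proof
    assume "even c"
    then obtain c' where "c = 2 * c'" by (elim evenE)
    then show False using False k_eq e by simp
  qed
  have "even (int (n div d) - c)" using odd_m \<open>odd c\<close> by simp
  then obtain w where w: "int (n div d) - c = 2 * w" by (elim evenE)
  have "int e * int (n div d) - k = int d * w" using w k_eq e by (simp add: algebra_simps)
  moreover have "2 * (int e * int (n div d)) = int n"
  proof -
    have "int d * int (n div d) = int n" using dn by (simp flip: of_nat_mult)
    then show ?thesis using e by (simp add: algebra_simps)
  qed
  ultimately show ?thesis by (intro exI[of _ "int e * int (n div d)"]) simp
qed

lemma half_multiples_no_lift:
  assumes dn: "d dvd n" and d: "0 < d" "even d" and m: "even (n div d)"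
  shows "\<nexists>l. int d dvd l - int (d div 2) \<and> int n dvd 2 * l"
proof
  assume "\<exists>l. int d dvd l - int (d div 2) \<and> int n dvd 2 * l"
  then obtain l where l1: "int d dvd l - int (d div 2)" and l2: "int n dvd 2 * l" by blast
  obtain e where e: "d = 2 * e" using d(2) by (elim evenE)
  obtain m' where m': "n div d = 2 * m'" using m by (elim evenE)
  have "n = d * (2 * m')" using dn m' by (metis dvd_mult_div_cancel)
  then have "2 * (int d * int m') dvd 2 * l" using l2 by (simp add: algebra_simps)
  then have "int d * int m' dvd l" by simp
  then have "int d dvd l" by (rule dvd_mult_left)
  then have "int d dvd l - (l - int (d div 2))" using l1 by (rule dvd_diff)
  then have "int d dvd int e" using e by simp
  moreover have "0 < e" "e < d" using d e by simp_all
  ultimately show False by (simp add: nat_dvd_not_less)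
qed

lemma half_multiples_lift_iff:
  assumes "d dvd n" "0 < d"
  shows "(\<forall>k. int d dvd 2 * k \<longrightarrow> (\<exists>l. int d dvd l - k \<and> int n dvd 2 * l)) \<longleftrightarrow>
    odd d \<or> odd (n div d)"
proof
  assume "\<forall>k. int d dvd 2 * k \<longrightarrow> (\<exists>l. int d dvd l - k \<and> int n dvd 2 * l)"
  moreover have "int d dvd 2 * int (d div 2)" if "even d"
    using that by (metis even_two_times_div_two of_nat_mult of_nat_numeral dvd_refl)
  ultimately show "odd d \<or> odd (n div d)" using half_multiples_no_lift[OF assms] by blast
qed (use half_multiples_lift[OF assms(1)] in blast)

lemma divisor_condition_iff:
  fixes m d :: nat
  assumes "0 < m"
  shows "(odd m \<or> m = 2 \<or> (4 \<le> m \<and> even m \<and> odd d)) \<longleftrightarrow> m \<le> 2 \<or> odd d \<or> odd m"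
  using assms by presburger

locale dihedral_group =
  fixes n :: nat
  assumes n_pos: "0 < n"
begin

abbreviation D :: "(nat \<times> bool) monoid" where "D \<equiv> dihedral n"

definition rotation :: "int \<Rightarrow> nat \<times> bool" where
  "rotation k = (nat (k mod int n), False)"

definition reflection :: "int \<Rightarrow> nat \<times> bool" where
  "reflection k = (nat (k mod int n), True)"

lemma mult_dihedral_mod:
  "(nat (k mod int n), s) \<otimes>\<^bsub>D\<^esub> (nat (l mod int n), t) =
     (nat ((k + (if s then - l else l)) mod int n), s \<noteq> t)"
proof -
  have l_le: "nat (l mod int n) \<le> n" using n_pos by (simp add: nat_le_iff order.strict_implies_order)
  have "int ((nat (k mod int n) + (if s then n - nat (l mod int n) else nat (l mod int n))) mod n)
      = (k mod int n + (if s then int n - l mod int n else l mod int n)) mod int n"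
    using l_le n_pos by (simp add: zmod_int of_nat_diff)
  also have "\<dots> = (k + (if s then - l else l)) mod int n"
  proof (cases s)
    case True
    have "(k mod int n + (int n - l mod int n)) mod int n = (k mod int n - l mod int n + int n) mod int n"
      by (simp add: algebra_simps)
    also have "\<dots> = (k - l) mod int n" by (simp add: mod_diff_eq)
    finally show ?thesis using True by simp
  qed (simp add: mod_simps)
  finally show ?thesis unfolding dihedral_def by (simp add: nat_eq_iff2)
qed

lemma rotation_mult_rotation [simp]: "rotation k \<otimes>\<^bsub>D\<^esub> rotation l = rotation (k + l)"
  and rotation_mult_reflection [simp]: "rotation k \<otimes>\<^bsub>D\<^esub> reflection l = reflection (k + l)"
  and reflection_mult_rotation [simp]: "reflection k \<otimes>\<^bsub>D\<^esub> rotation l = reflection (k - l)"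
  and reflection_mult_reflection [simp]: "reflection k \<otimes>\<^bsub>D\<^esub> reflection l = rotation (k - l)"
  unfolding rotation_def reflection_def mult_dihedral_mod by simp_all

lemma one_dihedral: "\<one>\<^bsub>D\<^esub> = rotation 0"
  unfolding dihedral_def rotation_def by simp

lemma rotation_closed [simp]: "rotation k \<in> carrier D"
  and reflection_closed [simp]: "reflection k \<in> carrier D"
  unfolding dihedral_def rotation_def reflection_def using n_pos by (simp_all add: nat_less_iff)

lemma rotation_eq_iff: "rotation k = rotation l \<longleftrightarrow> k mod int n = l mod int n"
  and reflection_eq_iff: "reflection k = reflection l \<longleftrightarrow> k mod int n = l mod int n"
  unfolding rotation_def reflection_def using n_pos by (simp_all add: eq_nat_nat_iff)

lemma rotation_eq_one_iff: "rotation k = \<one>\<^bsub>D\<^esub> \<longleftrightarrow> int n dvd k"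
  by (simp add: one_dihedral rotation_eq_iff dvd_eq_mod_eq_0)

lemma rotation_neq_reflection [simp]: "rotation k \<noteq> reflection l" "reflection l \<noteq> rotation k"
  unfolding rotation_def reflection_def by simp_all

lemma dihedral_cases [consumes 1, case_names rotation reflection]:
  assumes "x \<in> carrier D"
  obtains k where "x = rotation k" | k where "x = reflection k"
proof -
  obtain i s where x: "x = (i, s)" "i < n" using assms unfolding dihedral_def by auto
  then have "x = (if s then reflection (int i) else rotation (int i))"
    unfolding rotation_def reflection_def by (simp add: zmod_int[symmetric])
  then show ?thesis using that by (auto split: if_splits)
qed

lemma group_dihedral: "group D"
proof (rule groupI)
  fix x y z assume x: "x \<in> carrier D" and y: "y \<in> carrier D" and z: "z \<in> carrier D"
  show "x \<otimes>\<^bsub>D\<^esub> y \<in> carrier D"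
    by (cases rule: dihedral_cases[OF x]; cases rule: dihedral_cases[OF y]) simp_all
  show "x \<otimes>\<^bsub>D\<^esub> y \<otimes>\<^bsub>D\<^esub> z = x \<otimes>\<^bsub>D\<^esub> (y \<otimes>\<^bsub>D\<^esub> z)"
    by (cases rule: dihedral_cases[OF x]; cases rule: dihedral_cases[OF y];
        cases rule: dihedral_cases[OF z]) (simp_all add: algebra_simps)
  show "\<one>\<^bsub>D\<^esub> \<otimes>\<^bsub>D\<^esub> x = x"
    using x by (cases rule: dihedral_cases) (simp_all add: one_dihedral)
  show "\<exists>y\<in>carrier D. y \<otimes>\<^bsub>D\<^esub> x = \<one>\<^bsub>D\<^esub>"
    using x
  proof (cases rule: dihedral_cases)
    case (rotation k)
    then show ?thesis by (intro bexI[of _ "rotation (- k)"]) (simp_all add: one_dihedral)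
  next
    case (reflection k)
    then show ?thesis by (intro bexI[of _ "reflection k"]) (simp_all add: one_dihedral)
  qed
qed (simp add: one_dihedral)

sublocale D: group D by (rule group_dihedral)

lemma inv_rotation [simp]: "inv\<^bsub>D\<^esub> rotation k = rotation (- k)"
  and inv_reflection [simp]: "inv\<^bsub>D\<^esub> reflection k = reflection k"
  by (simp_all add: D.inv_equality one_dihedral)

lemma rotation_pow [simp]: "rotation k [^]\<^bsub>D\<^esub> m = rotation (k * int m)"
  by (induction m) (simp_all add: one_dihedral algebra_simps)

lemma rotation_int_pow [simp]: "rotation k [^]\<^bsub>D\<^esub> (q::int) = rotation (k * q)"
  by (simp add: int_pow_def2)

lemma dih_a_eq: "dih_a n = rotation 1"
  unfolding dih_a_def rotation_def by (metis nat_int of_nat_1 zmod_int)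

lemma dih_b_eq: "dih_b = reflection 0"
  unfolding dih_b_def reflection_def by simp

lemma rotation_mult_mem: "subgroup H D \<Longrightarrow> rotation c \<in> H \<Longrightarrow> rotation (c * q) \<in> H"
  using D.subgroup_int_pow_closed[of H "rotation c" q] by simp

definition rotations :: "nat \<Rightarrow> (nat \<times> bool) set" where
  "rotations d = {rotation k | k. int d dvd k}"

definition index_two_subgroup :: "int \<Rightarrow> (nat \<times> bool) set" where
  "index_two_subgroup j = {rotation k | k. even k} \<union> {reflection k | k. even (k - j)}"

lemma rotation_mem_rotations [simp]:
  assumes "d dvd n" shows "rotation k \<in> rotations d \<longleftrightarrow> int d dvd k"
proof -
  have "rotation k \<in> rotations d \<longleftrightarrow> (\<exists>l. k mod int n = l mod int n \<and> int d dvd l)"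
    unfolding rotations_def by (auto simp: rotation_eq_iff)
  also have "\<dots> \<longleftrightarrow> int d dvd k"
    using dvd_iff_of_mod_eq[of "int d" "int n" k] assms by (metis int_dvd_int_iff)
  finally show ?thesis .
qed

lemma reflection_notin_rotations [simp]: "reflection k \<notin> rotations d"
  unfolding rotations_def by auto

lemma rotation_mem_index_two [simp]:
  assumes "even n" shows "rotation k \<in> index_two_subgroup j \<longleftrightarrow> even k"
proof -
  have "rotation k \<in> index_two_subgroup j \<longleftrightarrow> (\<exists>l. k mod int n = l mod int n \<and> even l)"
    unfolding index_two_subgroup_def by (auto simp: rotation_eq_iff)
  also have "\<dots> \<longleftrightarrow> even k"
    using dvd_iff_of_mod_eq[of 2 "int n" k] assms by (metis even_of_nat)
  finally show ?thesis .
qed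

lemma reflection_mem_index_two [simp]:
  assumes "even n" shows "reflection k \<in> index_two_subgroup j \<longleftrightarrow> even (k - j)"
proof -
  have "reflection k \<in> index_two_subgroup j \<longleftrightarrow> (\<exists>l. k mod int n = l mod int n \<and> even (l - j))"
    unfolding index_two_subgroup_def by (auto simp: reflection_eq_iff)
  also have "\<dots> \<longleftrightarrow> even (k - j)"
    using dvd_iff_of_mod_eq[of 2 "int n" "k - j"] assms mod_diff_cong by (metis even_of_nat)
  finally show ?thesis .
qed

lemma index_two_subgroup_mod_two: "index_two_subgroup j = index_two_subgroup (j mod 2)"
  unfolding index_two_subgroup_def by (simp add: even_iff_mod_2_eq_zero mod_diff_right_eq)

lemma generate_rotation: "d dvd n \<Longrightarrow> generate D {rotation (int d)} = rotations d"
  unfolding D.generate_pow[OF rotation_closed] rotations_def by (auto simp: dvd_def)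

lemma index_two_subgroup_is_subgroup:
  assumes "even n" shows "subgroup (index_two_subgroup j) D"
proof (rule D.subgroupI)
  show "index_two_subgroup j \<subseteq> carrier D" unfolding index_two_subgroup_def by auto
  show "index_two_subgroup j \<noteq> {}" using rotation_mem_index_two[OF assms, of 0] by blast
next
  fix a assume "a \<in> index_two_subgroup j"
  then show "inv\<^bsub>D\<^esub> a \<in> index_two_subgroup j"
    unfolding index_two_subgroup_def by auto
next
  fix a b assume "a \<in> index_two_subgroup j" "b \<in> index_two_subgroup j"
  then show "a \<otimes>\<^bsub>D\<^esub> b \<in> index_two_subgroup j"
    using assms unfolding index_two_subgroup_def by auto
qed

lemma generate_index_two:
  assumes "even n" shows "generate D {rotation 2, reflection j} = index_two_subgroup j"
proof
  show "generate D {rotation 2, reflection j} \<subseteq> index_two_subgroup j"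
    using assms by (intro D.generate_subgroup_incl index_two_subgroup_is_subgroup) auto
next
  let ?G = "generate D {rotation 2, reflection j}"
  have sub: "subgroup ?G D" by (rule D.generate_is_subgroup) auto
  have gens: "rotation 2 \<in> ?G" "reflection j \<in> ?G" by (auto intro: generate.incl)
  show "index_two_subgroup j \<subseteq> ?G"
  proof
    fix x assume "x \<in> index_two_subgroup j"
    then consider (rot) k where "x = rotation k" "even k"
      | (refl) k where "x = reflection k" "even (k - j)"
      unfolding index_two_subgroup_def by auto
    then show "x \<in> ?G"
    proof cases
      case rot
      then obtain q where "k = 2 * q" by (elim evenE)
      then show ?thesis using rotation_mult_mem[OF sub gens(1), of q] rot(1) by simp
    next
      case refl
      then obtain q where "k - j = 2 * q" by (elim evenE)
      then have "k = 2 * q + j" by simp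
      moreover have "rotation (2 * q) \<otimes>\<^bsub>D\<^esub> reflection j \<in> ?G"
        using subgroup.m_closed[OF sub rotation_mult_mem[OF sub gens(1)] gens(2)] by simp
      ultimately show ?thesis using refl(1) by simp
    qed
  qed
qed

lemma subgroup_without_reflections_eq_rotations:
  assumes H: "subgroup H D" and no_refl: "\<And>k. reflection k \<notin> H"
  shows "\<exists>d>0. d dvd n \<and> H = rotations d"
proof -
  have "\<exists>d>0. d dvd n \<and> {k. rotation k \<in> H} = {k. int d dvd k}"
  proof (rule diff_closed_eq_multiples)
    fix k l assume "k \<in> {k. rotation k \<in> H}" "l \<in> {k. rotation k \<in> H}"
    then have k: "rotation k \<in> H" and l: "rotation l \<in> H" by simp_all
    have "rotation k \<otimes>\<^bsub>D\<^esub> inv\<^bsub>D\<^esub> rotation l \<in> H"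
      using subgroup.m_closed[OF H k subgroup.m_inv_closed[OF H l]] .
    then show "k - l \<in> {k. rotation k \<in> H}" by simp
  next
    have "rotation (int n) = \<one>\<^bsub>D\<^esub>" by (simp add: one_dihedral rotation_eq_iff)
    then show "int n \<in> {k. rotation k \<in> H}" using subgroup.one_closed[OF H] by simp
  qed (rule n_pos)
  then obtain d where d: "0 < d" "d dvd n" and mem: "\<And>k. rotation k \<in> H \<longleftrightarrow> int d dvd k"
    by blast
  have "H = rotations d"
  proof (intro equalityI subsetI)
    fix x assume x: "x \<in> H"
    then have "x \<in> carrier D" using subgroup.subset[OF H] by blast
    then show "x \<in> rotations d"
      by (cases rule: dihedral_cases) (use x no_refl mem d(2) in auto)
  next
    fix x assume "x \<in> rotations d"
    then show "x \<in> H" unfolding rotations_def using mem by auto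
  qed
  with d show ?thesis by blast
qed

lemma normal_reflection_conj:
  assumes N: "H \<lhd> D" and j: "reflection j \<in> H"
  shows "reflection (j + 2 * k) \<in> H" and "rotation (2 * k) \<in> H"
proof -
  have "rotation k \<otimes>\<^bsub>D\<^esub> reflection j \<otimes>\<^bsub>D\<^esub> inv\<^bsub>D\<^esub> rotation k \<in> H"
    by (rule normal.inv_op_closed2[OF N]) (simp_all add: j)
  then show refl: "reflection (j + 2 * k) \<in> H" by (simp add: algebra_simps)
  have "reflection (j + 2 * k) \<otimes>\<^bsub>D\<^esub> reflection j \<in> H"
    using subgroup.m_closed[OF normal_imp_subgroup[OF N] refl j] .
  then show "rotation (2 * k) \<in> H" by simp
qed

lemma subgroup_eq_carrier:
  assumes H: "subgroup H D" and a: "rotation 1 \<in> H" and b: "reflection j \<in> H"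
  shows "H = carrier D"
proof
  show "H \<subseteq> carrier D" using subgroup.subset[OF H] .
  show "carrier D \<subseteq> H"
  proof
    fix x assume "x \<in> carrier D"
    then show "x \<in> H"
    proof (cases rule: dihedral_cases)
      case (rotation k)
      then show ?thesis using rotation_mult_mem[OF H a, of k] by simp
    next
      case (reflection k)
      have "rotation (k - j) \<otimes>\<^bsub>D\<^esub> reflection j \<in> H"
        using subgroup.m_closed[OF H rotation_mult_mem[OF H a, of "k - j"] b] by simp
      then show ?thesis using reflection by simp
    qed
  qed
qed

lemma normal_odd_rotation_eq_carrier:
  assumes N: "H \<lhd> D" and j: "reflection j \<in> H" and k: "rotation k \<in> H" "odd k"
  shows "H = carrier D"
proof -
  have H: "subgroup H D" using N by (rule normal_imp_subgroup)
  have "2 * ((1 - k) div 2) = 1 - k" using k(2) by simp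
  then have "rotation k \<otimes>\<^bsub>D\<^esub> rotation (1 - k) \<in> H"
    using subgroup.m_closed[OF H k(1) normal_reflection_conj(2)[OF N j, of "(1 - k) div 2"]] by simp
  then have "rotation 1 \<in> H" by simp
  then show ?thesis by (rule subgroup_eq_carrier[OF H _ j])
qed

lemma index_two_subgroup_subset_normal:
  assumes N: "H \<lhd> D" and j: "reflection j \<in> H"
  shows "index_two_subgroup j \<subseteq> H"
proof
  fix x assume "x \<in> index_two_subgroup j"
  then consider (rot) k where "x = rotation k" "even k"
    | (refl) k where "x = reflection k" "even (k - j)"
    unfolding index_two_subgroup_def by auto
  then show "x \<in> H"
  proof cases
    case rot
    then obtain q where "k = 2 * q" by (elim evenE)
    then show ?thesis using rot(1) normal_reflection_conj(2)[OF N j, of q] by simp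
  next
    case refl
    then obtain q where "k - j = 2 * q" by (elim evenE)
    then have "k = j + 2 * q" by simp
    then show ?thesis using refl(1) normal_reflection_conj(1)[OF N j, of q] by simp
  qed
qed

lemma normal_with_reflection_cases:
  assumes N: "H \<lhd> D" and j: "reflection j \<in> H"
  shows "H = carrier D \<or> (even n \<and> H = index_two_subgroup j)"
proof (cases "even n")
  case False
  have "rotation (int n) \<in> H"
    using subgroup.one_closed[OF normal_imp_subgroup[OF N]] rotation_eq_one_iff[of "int n"] by simp
  then show ?thesis using normal_odd_rotation_eq_carrier[OF N j] False by simp
next
  case even: True
  have H: "subgroup H D" using N by (rule normal_imp_subgroup)
  show ?thesis
  proof (cases "H \<subseteq> index_two_subgroup j")
    case True
    then show ?thesis using index_two_subgroup_subset_normal[OF N j] even by blast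
  next
    case False
    then obtain x where x: "x \<in> H" "x \<notin> index_two_subgroup j" by blast
    then have "x \<in> carrier D" using subgroup.subset[OF H] by blast
    then show ?thesis
    proof (cases rule: dihedral_cases)
      case (rotation k)
      then have "rotation k \<in> H" "odd k" using x even by simp_all
      then show ?thesis using normal_odd_rotation_eq_carrier[OF N j] by blast
    next
      case (reflection k)
      have "reflection k \<in> H" using x reflection by simp
      then have "reflection k \<otimes>\<^bsub>D\<^esub> reflection j \<in> H" using subgroup.m_closed[OF H _ j] by blast
      moreover have "odd (k - j)" using x even reflection by simp
      ultimately show ?thesis using normal_odd_rotation_eq_carrier[OF N j, of "k - j"] by simp
    qed
  qed
qed

lemma involutions_lift_dihedral_iff:
  assumes H: "subgroup H D"
  shows "involutions_lift D H \<longleftrightarrow>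
    (\<forall>k. rotation (2 * k) \<in> H \<longrightarrow> (\<exists>y\<in>H #>\<^bsub>D\<^esub> rotation k. y \<otimes>\<^bsub>D\<^esub> y = \<one>\<^bsub>D\<^esub>))"
proof -
  have square: "rotation k \<otimes>\<^bsub>D\<^esub> rotation k = rotation (2 * k)" for k by simp
  have reflection_case: "\<exists>y\<in>H #>\<^bsub>D\<^esub> reflection k. y \<otimes>\<^bsub>D\<^esub> y = \<one>\<^bsub>D\<^esub>" for k
    using D.rcos_self[OF reflection_closed H, of k]
    by (intro bexI[of _ "reflection k"]) (simp_all add: one_dihedral)
  show ?thesis unfolding involutions_lift_def
  proof (intro iffI allI impI ballI)
    fix k assume all: "\<forall>x\<in>carrier D. x \<otimes>\<^bsub>D\<^esub> x \<in> H \<longrightarrow> (\<exists>y\<in>H #>\<^bsub>D\<^esub> x. y \<otimes>\<^bsub>D\<^esub> y = \<one>\<^bsub>D\<^esub>)"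
      and "rotation (2 * k) \<in> H"
    then have "rotation k \<otimes>\<^bsub>D\<^esub> rotation k \<in> H" by (simp only: square)
    then show "\<exists>y\<in>H #>\<^bsub>D\<^esub> rotation k. y \<otimes>\<^bsub>D\<^esub> y = \<one>\<^bsub>D\<^esub>"
      using all rotation_closed by blast
  next
    fix x assume rot: "\<forall>k. rotation (2 * k) \<in> H \<longrightarrow> (\<exists>y\<in>H #>\<^bsub>D\<^esub> rotation k. y \<otimes>\<^bsub>D\<^esub> y = \<one>\<^bsub>D\<^esub>)"
      and x: "x \<in> carrier D" "x \<otimes>\<^bsub>D\<^esub> x \<in> H"
    from x(1) show "\<exists>y\<in>H #>\<^bsub>D\<^esub> x. y \<otimes>\<^bsub>D\<^esub> y = \<one>\<^bsub>D\<^esub>"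
    proof (cases rule: dihedral_cases)
      case (rotation k)
      then show ?thesis using rot x(2) square[of k] by simp
    qed (simp add: reflection_case)
  qed
qed

lemma involutions_lift_if_reflection:
  assumes H: "subgroup H D" and j: "reflection j \<in> H"
  shows "involutions_lift D H"
  unfolding involutions_lift_dihedral_iff[OF H]
proof (intro allI impI)
  fix k
  have "reflection j \<otimes>\<^bsub>D\<^esub> rotation k \<in> H #>\<^bsub>D\<^esub> rotation k"
    using D.rcosI[OF j subgroup.subset[OF H] rotation_closed] .
  then show "\<exists>y\<in>H #>\<^bsub>D\<^esub> rotation k. y \<otimes>\<^bsub>D\<^esub> y = \<one>\<^bsub>D\<^esub>"
    by (intro bexI[of _ "reflection (j - k)"]) (simp_all add: one_dihedral)
qed

lemma rotations_subgroup: "d dvd n \<Longrightarrow> subgroup (rotations d) D"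
  using D.generate_is_subgroup[of "{rotation (int d)}"] generate_rotation by simp

lemma rotations_normal:
  assumes "d dvd n" shows "rotations d \<lhd> D"
  unfolding D.normal_inv_iff
proof (intro conjI ballI rotations_subgroup[OF assms])
  fix x h assume "x \<in> carrier D" "h \<in> rotations d"
  then show "x \<otimes>\<^bsub>D\<^esub> h \<otimes>\<^bsub>D\<^esub> inv\<^bsub>D\<^esub> x \<in> rotations d"
    unfolding rotations_def using assms
    by (cases rule: dihedral_cases) (auto simp: algebra_simps)
qed

lemma rcos_rotations_iff:
  "y \<in> rotations d #>\<^bsub>D\<^esub> rotation k \<longleftrightarrow> (\<exists>l. y = rotation l \<and> int d dvd l - k)"
proof
  assume "y \<in> rotations d #>\<^bsub>D\<^esub> rotation k"
  then obtain m where "y = rotation (m + k)" "int d dvd m"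
    unfolding r_coset_def rotations_def by auto
  then show "\<exists>l. y = rotation l \<and> int d dvd l - k" by auto
next
  assume "\<exists>l. y = rotation l \<and> int d dvd l - k"
  then obtain l where "y = rotation (l - k) \<otimes>\<^bsub>D\<^esub> rotation k" "int d dvd l - k" by auto
  then show "y \<in> rotations d #>\<^bsub>D\<^esub> rotation k"
    unfolding r_coset_def rotations_def by blast
qed

lemma involutions_lift_rotations_iff:
  assumes "d dvd n"
  shows "involutions_lift D (rotations d) \<longleftrightarrow>
    (\<forall>k. int d dvd 2 * k \<longrightarrow> (\<exists>l. int d dvd l - k \<and> int n dvd 2 * l))"
proof -
  have "(\<exists>y\<in>rotations d #>\<^bsub>D\<^esub> rotation k. y \<otimes>\<^bsub>D\<^esub> y = \<one>\<^bsub>D\<^esub>) \<longleftrightarrow>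
      (\<exists>l. int d dvd l - k \<and> int n dvd 2 * l)" for k
  proof
    assume "\<exists>y\<in>rotations d #>\<^bsub>D\<^esub> rotation k. y \<otimes>\<^bsub>D\<^esub> y = \<one>\<^bsub>D\<^esub>"
    then obtain y where y: "y \<in> rotations d #>\<^bsub>D\<^esub> rotation k" "y \<otimes>\<^bsub>D\<^esub> y = \<one>\<^bsub>D\<^esub>" by blast
    then obtain l where "y = rotation l" "int d dvd l - k" unfolding rcos_rotations_iff by blast
    then show "\<exists>l. int d dvd l - k \<and> int n dvd 2 * l" using y(2) by (auto simp: rotation_eq_one_iff)
  next
    assume "\<exists>l. int d dvd l - k \<and> int n dvd 2 * l"
    then obtain l where l: "int d dvd l - k" "int n dvd 2 * l" by blast
    then have "rotation l \<in> rotations d #>\<^bsub>D\<^esub> rotation k" unfolding rcos_rotations_iff by blast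
    then show "\<exists>y\<in>rotations d #>\<^bsub>D\<^esub> rotation k. y \<otimes>\<^bsub>D\<^esub> y = \<one>\<^bsub>D\<^esub>"
      using l(2) by (intro bexI) (simp_all add: rotation_eq_one_iff)
  qed
  then show ?thesis
    unfolding involutions_lift_dihedral_iff[OF rotations_subgroup[OF assms]] using assms by simp
qed

lemma card_rotations:
  assumes d: "0 < d" "d dvd n"
  shows "card (rotations d) = n div d"
proof -
  have dn: "int n = int d * int (n div d)" using d(2) by (simp flip: of_nat_mult)
  have "rotations d = (\<lambda>q. rotation (int d * int q)) ` {..<n div d}"
  proof (intro equalityI subsetI)
    fix x assume "x \<in> rotations d"
    then obtain k where k: "x = rotation k" "int d dvd k" unfolding rotations_def by auto
    have "int d dvd k mod int n" using k(2) d(2) by (simp add: dvd_mod_iff)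
    then obtain q where q: "k mod int n = int d * q" by (elim dvdE)
    have "0 \<le> q" using q d(1) n_pos by (metis pos_mod_sign of_nat_0_less_iff zero_le_mult_iff not_less)
    moreover have "q < int (n div d)" using q dn d(1) n_pos
      by (metis pos_mod_bound of_nat_0_less_iff mult_less_cancel_left_pos)
    moreover have "x = rotation (int d * q)" using k(1) by (simp add: rotation_eq_iff flip: q)
    ultimately show "x \<in> (\<lambda>q. rotation (int d * int q)) ` {..<n div d}"
      by (intro image_eqI[of _ _ "nat q"]) auto
  qed (auto simp: rotations_def)
  moreover have "inj_on (\<lambda>q. rotation (int d * int q)) {..<n div d}"
  proof (rule inj_onI)
    fix q q' assume "q \<in> {..<n div d}" "q' \<in> {..<n div d}"
      and eq: "rotation (int d * int q) = rotation (int d * int q')"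
    then have "int d * int q < int n" "int d * int q' < int n" using dn d(1) by simp_all
    then show "q = q'" using eq d(1) by (simp add: rotation_eq_iff)
  qed
  ultimately show ?thesis by (simp add: card_image)
qed

lemma rotations_eq_iff:
  assumes "0 < d" "d dvd n" "0 < t" "t dvd n"
  shows "rotations t = rotations d \<longleftrightarrow> t = d"
proof
  assume eq: "rotations t = rotations d"
  have "rotation (int t) \<in> rotations d" unfolding eq[symmetric] using assms(4) by simp
  moreover have "rotation (int d) \<in> rotations t" unfolding eq using assms(2) by simp
  ultimately show "t = d" using assms by (simp add: dvd_antisym)
qed simp

lemma finite_carrier_dihedral: "finite (carrier D)"
  unfolding dihedral_def by simp

lemma ssg_has_perfect_code_dihedral_iff_involutions_lift:
  assumes "H \<lhd> D"
  shows "ssg_has_perfect_code D H \<longleftrightarrow> card H \<le> 2 \<or> involutions_lift D H"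
  using normal.ssg_has_perfect_code_iff[OF assms]
    finite_subset[OF subgroup.subset[OF normal_imp_subgroup[OF assms]] finite_carrier_dihedral] by simp

lemma ssg_has_perfect_code_if_reflection:
  assumes "H \<lhd> D" "reflection j \<in> H"
  shows "ssg_has_perfect_code D H"
  using ssg_has_perfect_code_dihedral_iff_involutions_lift[OF assms(1)]
    involutions_lift_if_reflection[OF normal_imp_subgroup[OF assms(1)] assms(2)] by simp

lemma ssg_has_perfect_code_rotations_iff:
  assumes "0 < d" "d dvd n"
  shows "ssg_has_perfect_code D (rotations d) \<longleftrightarrow> n div d \<le> 2 \<or> odd d \<or> odd (n div d)"
  using ssg_has_perfect_code_dihedral_iff_involutions_lift[OF rotations_normal[OF assms(2)]]
    card_rotations[OF assms] involutions_lift_rotations_iff[OF assms(2)]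
    half_multiples_lift_iff[OF assms(2,1)]
  by simp

theorem ssg_has_perfect_code_dihedral_iff:
  assumes N: "H \<lhd> D"
  shows "ssg_has_perfect_code D H \<longleftrightarrow>
    H = carrier D \<or> (odd n \<and> H \<subseteq> rotations 1) \<or>
    (even n \<and> (H = index_two_subgroup 0 \<or> H = index_two_subgroup 1 \<or>
      (\<exists>t>0. t dvd n \<and> H = rotations t \<and>
        (odd (n div t) \<or> n div t = 2 \<or> (4 \<le> n div t \<and> even (n div t) \<and> odd t)))))"
proof (cases "\<exists>j. reflection j \<in> H")
  case True
  then obtain j where j: "reflection j \<in> H" ..
  have "index_two_subgroup j = index_two_subgroup 0 \<or> index_two_subgroup j = index_two_subgroup 1"
    using index_two_subgroup_mod_two[of j]
    by (cases "even j") (simp_all add: even_iff_mod_2_eq_zero odd_iff_mod_2_eq_one)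
  then show ?thesis
    using ssg_has_perfect_code_if_reflection[OF N j] normal_with_reflection_cases[OF N j] by blast
next
  case False
  then obtain d where d: "0 < d" "d dvd n" and H: "H = rotations d"
    using subgroup_without_reflections_eq_rotations[OF normal_imp_subgroup[OF N]] by blast
  have "reflection 0 \<in> index_two_subgroup 0" "reflection 1 \<in> index_two_subgroup 1"
    unfolding index_two_subgroup_def by auto
  then have ne: "H \<noteq> carrier D" "H \<noteq> index_two_subgroup 0" "H \<noteq> index_two_subgroup 1"
    unfolding H by (metis reflection_notin_rotations reflection_closed)+
  have code_iff: "ssg_has_perfect_code D H \<longleftrightarrow> n div d \<le> 2 \<or> odd d \<or> odd (n div d)"
    unfolding H by (rule ssg_has_perfect_code_rotations_iff[OF d])
  show ?thesis
  proof (cases "even n")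
    case True
    have "0 < n div d" using d n_pos by (simp add: dvd_imp_le div_greater_zero_iff)
    then have "(odd (n div d) \<or> n div d = 2 \<or> (4 \<le> n div d \<and> even (n div d) \<and> odd d)) \<longleftrightarrow>
        n div d \<le> 2 \<or> odd d \<or> odd (n div d)"
      by (rule divisor_condition_iff)
    moreover have "(\<exists>t>0. t dvd n \<and> H = rotations t \<and> P t) \<longleftrightarrow> P d" for P
      using rotations_eq_iff[OF d] d unfolding H by blast
    ultimately show ?thesis using code_iff ne True by simp
  next
    case False
    then have "odd d" using d(2) by (meson dvd_trans)
    moreover have "H \<subseteq> rotations 1" unfolding H rotations_def by auto
    ultimately show ?thesis using code_iff False by simp
  qed
qed

end

theorem theorem3p13:
  fixes n :: nat and H :: "(nat \<times> bool) set"
  assumes "n \<ge> 3"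
    and "H \<lhd> dihedral n"
  shows "ssg_has_perfect_code (dihedral n) H \<longleftrightarrow>
    H = carrier (dihedral n) \<or>
    (odd n \<and> H \<subseteq> generate (dihedral n) {dih_a n}) \<or>
    (even n \<and>
      (H = generate (dihedral n) {dih_a n [^]\<^bsub>dihedral n\<^esub> (2::nat), dih_b} \<or>
       H = generate (dihedral n) {dih_a n [^]\<^bsub>dihedral n\<^esub> (2::nat), dih_a n \<otimes>\<^bsub>dihedral n\<^esub> dih_b} \<or>
       (\<exists>t::nat. t > 0 \<and> t dvd n \<and> H = generate (dihedral n) {dih_a n [^]\<^bsub>dihedral n\<^esub> t} \<and>
          (odd (n div t) \<or> n div t = 2 \<or> (n div t \<ge> 4 \<and> even (n div t) \<and> odd t)))))"
proof -
  interpret dihedral_group n using assms(1) by unfold_locales simp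
  have "dih_a n \<otimes>\<^bsub>D\<^esub> dih_b = reflection 1" by (simp add: dih_a_eq dih_b_eq)
  moreover have "generate D {dih_a n} = rotations 1" using generate_rotation[of 1] by (simp add: dih_a_eq)
  ultimately show ?thesis
    unfolding ssg_has_perfect_code_dihedral_iff[OF assms(2)]
    by (simp add: dih_a_eq dih_b_eq generate_index_two generate_rotation cong: conj_cong)
qed

end
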